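(* Fix a dataset $\mathbb D_N$ and a point $x\in\mathcal X$. Suppose the GP-CBF-SOCP is feasible at $x$, i.e. there exists $u\in\mathbb R^m$ with $$L_{\tilde f}B(x)+L_{\tilde g}B(x)u+\mu_B(x,u|\mathbb D_N)-\beta\sigma_B(x,u|\mathbb D_N)+\gamma(B(x))\ge0.$$ Then $$\begin{bmatrix}\widehat{L_fB}(x|\mathbb D_N)+\gamma(B(x))\\ \widehat{L_gB}(x|\mathbb D_N)^T\end{bmatrix}^T\Sigma_B(x|\mathbb D_N)^{-1}\begin{bmatrix}\widehat{L_fB}(x|\mathbb D_N)+\gamma(B(x))\\ \widehat{L_gB}(x|\mathbb D_N)^T\end{bmatrix}\ge\beta^2.$$
   Context: Consider the control-affine system $\dot x=f(x)+g(x)u$ with state $x\in\mathcal X\subset\mathbb R^n$ and input $u\in\mathbb R^m$. Here $f$ and $g$ are locally Lipschitz and unknown. A nominal model $\tilde f,\tilde g$ of the same type is available. Let $B:\mathcal X\to\mathbb R$ be continuously differentiable and let $\gamma$ be an extended class-$\mathcal K_\infty$ function. Lie derivatives: $L_{\tilde f}B(x)=\nabla B(x)\tilde f(x)\in\mathbb R$ and $L_{\tilde g}B(x)=\nabla B(x)\tilde g(x)\in\mathbb R^{1\times m}$; $L_fB$ and $L_gB$ are defined similarly. Set $\Delta_B(x,u)=(L_fB-L_{\tilde f}B)(x)+(L_gB-L_{\tilde g}B)(x)u$. A dataset $\mathbb D_N=\{((x_j,u_j),z_j)\}_{j=1}^N$ consists of measurements $z_j=\Delta_B(x_j,u_j)+\epsilon_j$.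 GP model: - Kernels $k_1,\dots,k_{m+1}$ on $\mathcal X$ are given, together with the affine dot product kernel $k_c((x,y),(x',y'))=y^T\mathrm{diag}(k_i(x,x'))_{i=1}^{m+1}y'$. - Let $y_j=[1,u_j^T]^T$, $\mathbf z=(z_j)_j$, let $\sigma_n>0$, and let $K_c$ be the $N\times N$ Gram matrix of $k_c$ on the data. - Let $K_{**}(x)=\mathrm{diag}(k_i(x,x))$, and let $K_{*Y}(x)\in\mathbb R^{(m+1)\times N}$ have entries $k_i(x,x_j)(y_j)_i$. - Define $m_B(x|\mathbb D_N)=K_{*Y}(K_c+\sigma_n^2I)^{-1}\mathbf z$ and $\Sigma_B(x|\mathbb D_N)=K_{**}-K_{*Y}(K_c+\sigma_n^2I)^{-1}K_{*Y}^T$. The matrix $\Sigma_B(x|\mathbb D_N)$ is positive definite. - The GP posterior mean and standard deviation are $\mu_B(x,u|\mathbb D_N)=m_B^T[1;u]$ and $\sigma_B(x,u|\mathbb D_N)=\sqrt{[1,u^T]\Sigma_B[1;u]}$. $\beta>0$ is a constant. Define $\widehat{L_fB}(x|\mathbb D_N)=L_{\tilde f}B(x)+(m_B)_1$ and $\widehat{L_gB}(x|\mathbb D_N)=L_{\tilde g}B(x)+((m_B)_2,\dots,(m_B)_{m+1})\in\mathbb R^{1\times m}$. The GP-CBF-SOCP at $x$ minimizes $\|u-u_{\text{ref}}(x)\|_2^2$ subject to the displayed constraint, where $u_{\text{ref}}$ is a reference controller. *)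

theory Defs
  imports "HOL-Analysis.Analysis"
begin

text \<open>Index type for R^(m+1): None is the first (drift) coordinate, Some j the j-th input.\<close>

definition ext_class_Kinf :: "(real \<Rightarrow> real) \<Rightarrow> bool" where
  "ext_class_Kinf \<gamma> \<longleftrightarrow> continuous_on UNIV \<gamma> \<and> strict_mono \<gamma> \<and> \<gamma> 0 = 0 \<and>
     filterlim \<gamma> at_top at_top \<and> filterlim \<gamma> at_bot at_bot"

definition locally_lipschitz_on :: "'a::metric_space set \<Rightarrow> ('a \<Rightarrow> 'b::metric_space) \<Rightarrow> bool" where
  "locally_lipschitz_on X h \<longleftrightarrow> (\<forall>x\<in>X. \<exists>e>0. \<exists>L. \<forall>y\<in>ball x e \<inter> X. \<forall>w\<in>ball x e \<inter> X.
      dist (h y) (h w) \<le> L * dist y w)"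

definition psd_kernel :: "('a \<Rightarrow> 'a \<Rightarrow> real) \<Rightarrow> bool" where
  "psd_kernel k \<longleftrightarrow> (\<forall>x y. k x y = k y x) \<and>
     (\<forall>(n::nat) (p::nat \<Rightarrow> 'a) (c::nat \<Rightarrow> real). (\<Sum>a<n. \<Sum>b<n. c a * c b * k (p a) (p b)) \<ge> 0)"

definition aug :: "real^'m \<Rightarrow> real^('m option)" where
  "aug u = (\<chi> i. case i of None \<Rightarrow> 1 | Some j \<Rightarrow> u $ j)"

definition Kc :: "('m option \<Rightarrow> 'x \<Rightarrow> 'x \<Rightarrow> real) \<Rightarrow> ('N \<Rightarrow> 'x) \<Rightarrow> ('N \<Rightarrow> real^'m)
     \<Rightarrow> real^'N::finite^'N" where
  "Kc k xs us = (\<chi> j l. \<Sum>i\<in>UNIV. (aug (us j)) $ i * k i (xs j) (xs l) * (aug (us l)) $ i)"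

definition Kss :: "('m option \<Rightarrow> 'x \<Rightarrow> 'x \<Rightarrow> real) \<Rightarrow> 'x \<Rightarrow> real^('m::finite option)^('m option)" where
  "Kss k x = (\<chi> i i'. if i = i' then k i x x else 0)"

definition KsY :: "('m option \<Rightarrow> 'x \<Rightarrow> 'x \<Rightarrow> real) \<Rightarrow> ('N \<Rightarrow> 'x) \<Rightarrow> ('N \<Rightarrow> real^'m) \<Rightarrow> 'x
     \<Rightarrow> real^'N::finite^('m::finite option)" where
  "KsY k xs us x = (\<chi> i j. k i x (xs j) * (aug (us j)) $ i)"

definition mB :: "('m option \<Rightarrow> 'x \<Rightarrow> 'x \<Rightarrow> real) \<Rightarrow> ('N \<Rightarrow> 'x) \<Rightarrow> ('N \<Rightarrow> real^'m) \<Rightarrow> real^'N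
     \<Rightarrow> real \<Rightarrow> 'x \<Rightarrow> real^('m::finite option)" where
  "mB k xs us z sn x =
     KsY k xs us x *v (matrix_inv (Kc k xs us + (sn\<^sup>2) *\<^sub>R mat 1) *v z)"

definition SigmaB :: "('m option \<Rightarrow> 'x \<Rightarrow> 'x \<Rightarrow> real) \<Rightarrow> ('N::finite \<Rightarrow> 'x) \<Rightarrow> ('N \<Rightarrow> real^'m)
     \<Rightarrow> real \<Rightarrow> 'x \<Rightarrow> real^('m::finite option)^('m option)" where
  "SigmaB k xs us sn x =
     Kss k x - KsY k xs us x ** matrix_inv (Kc k xs us + (sn\<^sup>2) *\<^sub>R mat 1) ** transpose (KsY k xs us x)"

definition muB where
  "muB k xs us z sn x u = mB k xs us z sn x \<bullet> aug u"

definition sigmaB where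
  "sigmaB k xs us sn x u = sqrt (aug u \<bullet> (SigmaB k xs us sn x *v aug u))"

definition LfB :: "(real^'n::finite \<Rightarrow> real^'n) \<Rightarrow> (real^'n \<Rightarrow> real^'n) \<Rightarrow> real^'n \<Rightarrow> real" where
  "LfB gradB f x = gradB x \<bullet> f x"

definition LgB :: "(real^'n \<Rightarrow> real^'n) \<Rightarrow> (real^'n \<Rightarrow> real^'m^'n) \<Rightarrow> real^'n::finite \<Rightarrow> real^'m::finite" where
  "LgB gradB g x = (\<chi> j. gradB x \<bullet> column j (g x))"

end

theory Submission
  imports Defs
begin

text \<open>Write \<open>y = [1; u]\<close> for a feasible input \<open>u\<close> and \<open>a\<close> for the vector on the left of the claim.
  The constraint of the SOCP says exactly \<open>a \<bullet> y \<ge> \<beta> sqrt (y\<^sup>T \<Sigma> y)\<close>. The Cauchy-Schwarz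
  inequality for the inner product defined by \<open>\<Sigma>\<close>, applied to \<open>\<Sigma>\<^sup>-\<^sup>1 a\<close> and \<open>y\<close>, gives
  \<open>(a \<bullet> y)\<^sup>2 \<le> (a\<^sup>T \<Sigma>\<^sup>-\<^sup>1 a) (y\<^sup>T \<Sigma> y)\<close>, and dividing by \<open>y\<^sup>T \<Sigma> y > 0\<close> yields the bound.
  Cauchy-Schwarz needs \<open>\<Sigma>\<close> to be symmetric; this follows from the symmetry of the kernels
  once \<open>K\<^sub>c + \<sigma>\<^sub>n\<^sup>2 I\<close> is known to be invertible, which holds because it is positive definite.\<close>

lemma invertible_if_pos_def:
  fixes S :: "real^'k^'k"
  assumes "\<forall>v. v \<noteq> 0 \<longrightarrow> v \<bullet> (S *v v) > 0"
  shows "invertible S"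
proof -
  have "\<forall>v. S *v v = 0 \<longrightarrow> v = 0" using assms by force
  then show ?thesis using matrix_left_invertible_ker invertible_left_inverse by blast
qed

lemma
  fixes S :: "real^'k^'k"
  assumes "invertible S"
  shows matrix_inv_right: "S ** matrix_inv S = mat 1"
    and matrix_inv_left: "matrix_inv S ** S = mat 1"
proof -
  have "\<exists>S'. S ** S' = mat 1 \<and> S' ** S = mat 1" using assms invertible_def by blast
  then have "S ** matrix_inv S = mat 1 \<and> matrix_inv S ** S = mat 1"
    unfolding matrix_inv_def by (rule someI_ex)
  then show "S ** matrix_inv S = mat 1" "matrix_inv S ** S = mat 1" by auto
qed

lemma transpose_matrix_inv_symmetric:
  fixes S :: "real^'k^'k"
  assumes "invertible S" "transpose S = S"
  shows "transpose (matrix_inv S) = matrix_inv S"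
proof -
  let ?T = "matrix_inv S"
  have "S ** transpose ?T = mat 1"
    using arg_cong[OF matrix_inv_left[OF assms(1)], of transpose] assms(2)
    by (simp add: matrix_transpose_mul)
  then have "?T = ?T ** (S ** transpose ?T)" by simp
  also have "\<dots> = (?T ** S) ** transpose ?T" by (simp add: matrix_mul_assoc)
  also have "\<dots> = transpose ?T" by (simp add: matrix_inv_left[OF assms(1)])
  finally show ?thesis by simp
qed

lemma symmetric_matrix_inner_swap:
  fixes S :: "real^'k^'k"
  assumes "transpose S = S"
  shows "(S *v w) \<bullet> y = w \<bullet> (S *v y)"
  by (metis assms dot_lmul_matrix inner_commute transpose_matrix_vector)

lemma quadratic_form_Cauchy_Schwarz:
  fixes S :: "real^'k^'k"
  assumes sym: "transpose S = S" and psd: "\<And>v. v \<bullet> (S *v v) \<ge> 0"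
  shows "(w \<bullet> (S *v y))\<^sup>2 \<le> (w \<bullet> (S *v w)) * (y \<bullet> (S *v y))"
proof -
  define p where "p = w \<bullet> (S *v w)"
  define c where "c = w \<bullet> (S *v y)"
  define q where "q = y \<bullet> (S *v y)"
  have quadratic: "0 \<le> p - 2 * t * c + t\<^sup>2 * q" for t
  proof -
    have "0 \<le> (w - t *\<^sub>R y) \<bullet> (S *v (w - t *\<^sub>R y))" by (rule psd)
    also have "\<dots> = p - 2 * t * c + t\<^sup>2 * q"
      using symmetric_matrix_inner_swap[OF sym, of y w]
      by (simp add: matrix_vector_mult_diff_distrib matrix_vector_mult_scaleR inner_diff_left
          inner_diff_right p_def c_def q_def power2_eq_square algebra_simps inner_commute)
    finally show ?thesis .
  qed
  have "q \<ge> 0" unfolding q_def by (rule psd)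
  then consider "q > 0" | "q = 0" by linarith
  then have "c\<^sup>2 \<le> p * q"
  proof cases
    case 1
    have "0 \<le> p - c\<^sup>2 / q"
      using quadratic[of "c / q"] 1 by (simp add: field_simps power2_eq_square)
    then show ?thesis using 1 by (simp add: field_simps)
  next
    case 2
    \<comment> \<open>the quadratic degenerates to an affine function of \<open>t\<close>, which is bounded below only if \<open>c = 0\<close>\<close>
    have "c = 0"
    proof (rule ccontr)
      assume "c \<noteq> 0"
      then show False using quadratic[of "(p + 1) / (2 * c)"] 2 by (simp add: field_simps)
    qed
    then show ?thesis using 2 by simp
  qed
  then show ?thesis by (simp add: p_def c_def q_def)
qed

lemma inner_matrix_inv_Cauchy_Schwarz:
  fixes S :: "real^'k^'k"
  assumes "invertible S" "transpose S = S" "\<And>v. v \<bullet> (S *v v) \<ge> 0"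
  shows "(a \<bullet> y)\<^sup>2 \<le> (a \<bullet> (matrix_inv S *v a)) * (y \<bullet> (S *v y))"
proof -
  define w where "w = matrix_inv S *v a"
  have Sw: "S *v w = a"
    by (simp add: w_def matrix_vector_mul_assoc matrix_inv_right[OF assms(1)])
  have "a \<bullet> y = w \<bullet> (S *v y)"
    using symmetric_matrix_inner_swap[OF assms(2)] Sw by metis
  moreover have "a \<bullet> (matrix_inv S *v a) = w \<bullet> (S *v w)"
    by (simp add: Sw inner_commute flip: w_def)
  ultimately show ?thesis
    using quadratic_form_Cauchy_Schwarz[OF assms(2,3)] by simp
qed

lemma inner_matrix_inv_ge_sq:
  fixes S :: "real^'k^'k" and \<beta> :: real
  assumes sym: "transpose S = S" and pd: "\<forall>v. v \<noteq> 0 \<longrightarrow> v \<bullet> (S *v v) > 0"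
    and "y \<noteq> 0" and "\<beta> \<ge> 0" and bound: "\<beta> * sqrt (y \<bullet> (S *v y)) \<le> a \<bullet> y"
  shows "\<beta>\<^sup>2 \<le> a \<bullet> (matrix_inv S *v a)"
proof -
  define q where "q = y \<bullet> (S *v y)"
  have q: "q > 0" using pd \<open>y \<noteq> 0\<close> by (simp add: q_def)
  have psd: "v \<bullet> (S *v v) \<ge> 0" for v
    using pd by (cases "v = 0") (auto intro: less_imp_le)
  have "\<beta>\<^sup>2 * q = (\<beta> * sqrt q)\<^sup>2" using q by (simp add: power_mult_distrib)
  also have "\<dots> \<le> (a \<bullet> y)\<^sup>2"
    using bound q \<open>\<beta> \<ge> 0\<close> by (intro power_mono) (simp_all add: q_def)
  also have "\<dots> \<le> (a \<bullet> (matrix_inv S *v a)) * q"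
    unfolding q_def by (rule inner_matrix_inv_Cauchy_Schwarz[OF invertible_if_pos_def[OF pd] sym psd])
  finally show ?thesis using q by simp
qed

lemma psd_kernel_sum_nonneg:
  fixes K :: "'a \<Rightarrow> 'a \<Rightarrow> real" and p :: "'N::finite \<Rightarrow> 'a" and c :: "'N \<Rightarrow> real"
  assumes "psd_kernel K"
  shows "(\<Sum>j\<in>UNIV. \<Sum>l\<in>UNIV. c j * c l * K (p j) (p l)) \<ge> 0"
proof -
  let ?n = "card (UNIV::'N set)"
  obtain h where h: "bij_betw h {..<?n} (UNIV::'N set)"
    using ex_bij_betw_nat_finite[of "UNIV::'N set"] by (auto simp: atLeast0LessThan)
  have reindex: "sum g UNIV = (\<Sum>a<?n. g (h a))" for g :: "'N \<Rightarrow> real"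
    using sum.reindex_bij_betw[OF h] by metis
  have "(\<Sum>j\<in>UNIV. \<Sum>l\<in>UNIV. c j * c l * K (p j) (p l))
      = (\<Sum>a<?n. \<Sum>b<?n. (c \<circ> h) a * (c \<circ> h) b * K ((p \<circ> h) a) ((p \<circ> h) b))"
    by (simp add: reindex)
  also have "\<dots> \<ge> 0" using assms unfolding psd_kernel_def by blast
  finally show ?thesis .
qed

lemma Kc_quadratic_form_nonneg:
  fixes k :: "'m::finite option \<Rightarrow> 'x \<Rightarrow> 'x \<Rightarrow> real" and xs :: "'N::finite \<Rightarrow> 'x"
  assumes "\<forall>i. psd_kernel (k i)"
  shows "v \<bullet> (Kc k xs us *v v) \<ge> 0"
proof -
  let ?t = "\<lambda>i j l. (v $ j * aug (us j) $ i) * (v $ l * aug (us l) $ i) * k i (xs j) (xs l)"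
  have "v \<bullet> (Kc k xs us *v v) = (\<Sum>j\<in>UNIV. \<Sum>l\<in>UNIV. \<Sum>i\<in>UNIV. ?t i j l)"
    unfolding inner_vec_def matrix_vector_mult_def Kc_def
    by (simp add: sum_distrib_left sum_distrib_right algebra_simps)
  also have "\<dots> = (\<Sum>j\<in>UNIV. \<Sum>i\<in>UNIV. \<Sum>l\<in>UNIV. ?t i j l)"
    by (rule sum.cong[OF refl], rule sum.swap)
  also have "\<dots> = (\<Sum>i\<in>UNIV. \<Sum>j\<in>UNIV. \<Sum>l\<in>UNIV. ?t i j l)"
    by (rule sum.swap)
  also have "\<dots> \<ge> 0"
    using assms by (intro sum_nonneg psd_kernel_sum_nonneg) auto
  finally show ?thesis .
qed

lemma SigmaB_symmetric:
  fixes k :: "'m::finite option \<Rightarrow> 'x \<Rightarrow> 'x \<Rightarrow> real" and xs :: "'N::finite \<Rightarrow> 'x"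
  assumes kernels: "\<forall>i. psd_kernel (k i)" and "sn > 0"
  shows "transpose (SigmaB k xs us sn x) = SigmaB k xs us sn x"
proof -
  let ?A = "Kc k xs us + (sn\<^sup>2) *\<^sub>R mat 1"
  let ?K = "KsY k xs us x"
  have "k i a b = k i b a" for i a b using kernels unfolding psd_kernel_def by blast
  then have A_sym: "transpose ?A = ?A"
    by (simp add: vec_eq_iff transpose_def Kc_def mat_def mult_ac)
  have "v \<bullet> (?A *v v) > 0" if "v \<noteq> 0" for v :: "real^'N"
  proof -
    have "?A *v v = Kc k xs us *v v + (sn\<^sup>2) *\<^sub>R v"
      by (simp add: matrix_vector_mult_add_rdistrib flip: scaleR_matrix_vector_assoc)
    moreover have "sn\<^sup>2 * (v \<bullet> v) > 0" using \<open>sn > 0\<close> \<open>v \<noteq> 0\<close> by simp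
    ultimately show ?thesis
      using Kc_quadratic_form_nonneg[OF kernels, of v xs us] by (simp add: inner_add_right)
  qed
  then have "transpose (matrix_inv ?A) = matrix_inv ?A"
    using transpose_matrix_inv_symmetric[OF invertible_if_pos_def A_sym] by blast
  then have "transpose (?K ** matrix_inv ?A ** transpose ?K) = ?K ** matrix_inv ?A ** transpose ?K"
    by (simp add: matrix_transpose_mul matrix_mul_assoc)
  moreover have "transpose (Kss k x) = Kss k x"
    by (simp add: vec_eq_iff transpose_def Kss_def)
  ultimately show ?thesis
    by (simp add: SigmaB_def vec_eq_iff transpose_def)
qed

lemma aug_nonzero: "aug u \<noteq> 0"
proof
  assume "aug u = 0"
  then have "aug u $ None = 0" by simp
  then show False by (simp add: aug_def)
qed

lemma inner_aug:
  fixes b :: "real^('m::finite option)"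
  shows "b \<bullet> aug u = b $ None + (\<Sum>j\<in>UNIV. b $ Some j * u $ j)"
proof -
  have "b \<bullet> aug u = (\<Sum>i\<in>insert None (range Some). b $ i * aug u $ i)"
    unfolding inner_vec_def by (simp add: UNIV_option_conv[symmetric])
  also have "\<dots> = b $ None + (\<Sum>j\<in>UNIV. b $ Some j * u $ j)"
    by (subst sum.insert) (auto simp: sum.reindex aug_def)
  finally show ?thesis .
qed

theorem lemma3:
  fixes X :: "(real^'n::finite) set"
    and ft :: "real^'n \<Rightarrow> real^'n" and gt :: "real^'n \<Rightarrow> real^'m::finite^'n"
    and B :: "real^'n \<Rightarrow> real" and gradB :: "real^'n \<Rightarrow> real^'n"
    and \<gamma> :: "real \<Rightarrow> real"
    and k :: "'m option \<Rightarrow> real^'n \<Rightarrow> real^'n \<Rightarrow> real"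
    and xs :: "'N::finite \<Rightarrow> real^'n" and us :: "'N \<Rightarrow> real^'m" and z :: "real^'N"
    and sn \<beta> :: real and x :: "real^'n"
  assumes ft_lip: "locally_lipschitz_on X ft" and gt_lip: "locally_lipschitz_on X gt"
    and B_C1: "\<forall>y\<in>X. (B has_derivative (\<lambda>h. gradB y \<bullet> h)) (at y)" "continuous_on X gradB"
    and gamma: "ext_class_Kinf \<gamma>"
    and kernels: "\<forall>i. psd_kernel (k i)"
    and data: "\<forall>j. xs j \<in> X"
    and sn_pos: "sn > 0" and beta_pos: "\<beta> > 0"
    and x_in: "x \<in> X"
    and Sigma_pd: "\<forall>v. v \<noteq> 0 \<longrightarrow> v \<bullet> (SigmaB k xs us sn x *v v) > 0"
    and feasible: "\<exists>u::real^'m. LfB gradB ft x + LgB gradB gt x \<bullet> u + muB k xs us z sn x u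
                      - \<beta> * sigmaB k xs us sn x u + \<gamma> (B x) \<ge> 0"
  shows "let hatLf = LfB gradB ft x + mB k xs us z sn x $ None;
             hatLg = LgB gradB gt x + (\<chi> j. mB k xs us z sn x $ Some j);
             a = (\<chi> i. case i of None \<Rightarrow> hatLf + \<gamma> (B x) | Some j \<Rightarrow> hatLg $ j)
         in a \<bullet> (matrix_inv (SigmaB k xs us sn x) *v a) \<ge> \<beta>\<^sup>2"
proof -
  obtain u :: "real^'m" where u: "LfB gradB ft x + LgB gradB gt x \<bullet> u + muB k xs us z sn x u
                      - \<beta> * sigmaB k xs us sn x u + \<gamma> (B x) \<ge> 0" using feasible by blast
  define m where "m = mB k xs us z sn x"
  define a :: "real^('m option)" where "a = (\<chi> i. case i of None \<Rightarrow> LfB gradB ft x + m $ None + \<gamma> (B x)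
      | Some j \<Rightarrow> (LgB gradB gt x + (\<chi> j. m $ Some j)) $ j)"
  have "a \<bullet> aug u = LfB gradB ft x + LgB gradB gt x \<bullet> u + muB k xs us z sn x u + \<gamma> (B x)"
    unfolding muB_def inner_aug m_def[symmetric]
    by (simp add: a_def inner_vec_def algebra_simps sum.distrib)
  then have "\<beta> * sqrt (aug u \<bullet> (SigmaB k xs us sn x *v aug u)) \<le> a \<bullet> aug u"
    using u unfolding sigmaB_def by linarith
  then have "\<beta>\<^sup>2 \<le> a \<bullet> (matrix_inv (SigmaB k xs us sn x) *v a)"
    using inner_matrix_inv_ge_sq[OF SigmaB_symmetric[OF kernels sn_pos] Sigma_pd aug_nonzero]
      beta_pos by simp
  then show ?thesis unfolding Let_def a_def m_def .
qed

end
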